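(* Fix an integer $d\ge1$, let $A:=\cos(g^{\circ d}(\pi))\in(0,1]$, $\eta\in(0,1/2]$, $\sigma>0$, $\beta:=2\eta/\sigma^2$, and $0\le c\le A/40$. Let $F:\mathbb{R}^n\to\mathbb{R}^n$ be a measurable vector field with $\|F(x)-\nabla L(x)\|\le c(\|x\|+1)$ for every $x$ at which $L$ is differentiable. Let $x_0\ne0$ and $x_{t+1}=x_t-\eta F(x_t)+z_{t+1}$ with $z_1,z_2,\dots$ i.i.d. $N(0,\sigma^2I_n)$. Then for every integer $t\ge3/\eta$ and every $a>0$, $$\Pr\big[\|x_t\|<0.9A-a\big]\le e^{-\beta a^2/4}.$$
   Context: $e_1=(1,0,\dots,0)\in\mathbb{R}^n$; for $x\neq0$, $\theta(x)\in[0,\pi]$ is the angle between $x$ and $e_1$. $g(\theta)=\arccos\big(\frac{(\pi-\theta)\cos\theta+\sin\theta}{\pi}\big)$, $g^{\circ d}$ its $d$-fold composition. $L(x)=\frac12\|x\|^2-\|x\|\cos\big(g^{\circ d}(\theta(x))\big)+\frac12$. (In the paper $F=\nabla\tilde L$, the gradient of the actual network loss, which is close to $\nabla L$ under the WDC/RRIC assumptions.) *)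

theory Defs
  imports "HOL-Probability.Probability"
begin

text \<open>Angle between a nonzero vector x and the fixed unit vector e (playing the role of e_1).\<close>
definition theta :: "'a::euclidean_space \<Rightarrow> 'a \<Rightarrow> real" where
  "theta e x = arccos ((x \<bullet> e) / (norm x * norm e))"

definition gfun :: "real \<Rightarrow> real" where
  "gfun th = arccos (((pi - th) * cos th + sin th) / pi)"

definition Lfun :: "nat \<Rightarrow> 'a::euclidean_space \<Rightarrow> 'a \<Rightarrow> real" where
  "Lfun d e x = (1/2) * (norm x)\<^sup>2 - norm x * cos ((gfun ^^ d) (theta e x)) + 1/2"

definition gauss_dens :: "real \<Rightarrow> 'a::euclidean_space \<Rightarrow> real" where
  "gauss_dens s v = (2 * pi * s\<^sup>2) powr (- real DIM('a) / 2) * exp (- (norm v)\<^sup>2 / (2 * s\<^sup>2))"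

end

theory Submission
  imports Defs
begin

text \<open>Along the ray through \<open>x\<close> the function \<open>L\<close> is a quadratic polynomial, so the radial
  component of \<open>\<nabla>L(x)\<close> is \<open>\<parallel>x\<parallel> - cos (g\<^sup>d (\<theta> x)) \<le> \<parallel>x\<parallel> - A\<close>, since \<open>g\<close> maps \<open>[0, pi]\<close>
  monotonically into itself. Hence, wherever \<open>L\<close> is differentiable at \<open>x\<^sub>k\<close>,
  \<open>\<parallel>x\<^sub>k\<^sub>+\<^sub>1\<parallel> \<ge> q \<parallel>x\<^sub>k\<parallel> + eta (A - c) + \<langle>z\<^sub>k\<^sub>+\<^sub>1, x\<^sub>k / \<parallel>x\<^sub>k\<parallel>\<rangle>\<close> with \<open>q = 1 - eta (1 + c)\<close>; for
  \<open>k \<ge> 1\<close> this holds almost surely, as the Gaussian noise avoids the null set where \<open>L\<close> may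
  fail to be differentiable. Since \<open>z\<^sub>k\<^sub>+\<^sub>1\<close> is independent of \<open>x\<^sub>k\<close>, the Laplace transform
  \<open>E exp (- lam \<parallel>x\<^sub>k\<parallel>)\<close> contracts by a factor \<open>exp (- lam eta (A - c) + lam\<^sup>2 sigma\<^sup>2 / 2)\<close> while
  \<open>lam\<close> shrinks to \<open>q lam\<close>. After \<open>t \<ge> 3/eta\<close> steps the accumulated drift exceeds \<open>0.9 A\<close> and
  the accumulated variance stays below \<open>sigma\<^sup>2 / (2 eta)\<close>, and a Chernoff bound concludes.\<close>

section \<open>The angle map \<open>g\<close>\<close>

definition arccos_kernel :: "real \<Rightarrow> real" where
  "arccos_kernel th = ((pi - th) * cos th + sin th) / pi"

lemma gfun_eq_arccos_kernel: "gfun th = arccos (arccos_kernel th)"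
  by (simp add: gfun_def arccos_kernel_def)

lemma arccos_kernel_has_real_derivative:
  "(arccos_kernel has_real_derivative (- (pi - th) * sin th / pi)) (at th)"
  unfolding arccos_kernel_def by (auto intro!: derivative_eq_intros simp: field_simps)

lemma arccos_kernel_derivative_sign:
  assumes "0 \<le> th" "th \<le> pi"
  shows "- (pi - th) * sin th / pi \<le> 0"
    and "0 < th \<Longrightarrow> th < pi \<Longrightarrow> - (pi - th) * sin th / pi < 0"
  using assms sin_ge_zero[of th] sin_gt_zero[of th]
  by (auto intro!: divide_nonpos_pos mult_nonpos_nonneg divide_neg_pos mult_neg_pos)

lemma arccos_kernel_antimono:
  assumes "0 \<le> x" "x \<le> y" "y \<le> pi"
  shows "arccos_kernel y \<le> arccos_kernel x"
proof (rule DERIV_nonpos_imp_nonincreasing[OF \<open>x \<le> y\<close>])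
  fix t assume "x \<le> t" "t \<le> y"
  then show "\<exists>D. (arccos_kernel has_real_derivative D) (at t) \<and> D \<le> 0"
    using assms arccos_kernel_derivative_sign[of t]
    by (intro exI[of _ "- (pi - t) * sin t / pi"] conjI arccos_kernel_has_real_derivative) auto
qed

lemma arccos_kernel_less_1:
  assumes "0 < x" "x \<le> pi"
  shows "arccos_kernel x < 1"
proof -
  have "arccos_kernel x < arccos_kernel 0"
  proof (rule DERIV_neg_imp_decreasing_open[OF \<open>0 < x\<close>])
    show "continuous_on {0..x} arccos_kernel"
      unfolding arccos_kernel_def by (intro continuous_intros) auto
    fix t assume "0 < t" "t < x"
    then show "\<exists>D. (arccos_kernel has_real_derivative D) (at t) \<and> D < 0"
        using assms arccos_kernel_derivative_sign[of t]
      by (intro exI[of _ "- (pi - t) * sin t / pi"] conjI arccos_kernel_has_real_derivative) auto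
  qed
  then show ?thesis by (simp add: arccos_kernel_def)
qed

lemma arccos_kernel_bounds:
  assumes "0 \<le> x" "x \<le> pi"
  shows "0 \<le> arccos_kernel x" "arccos_kernel x \<le> 1"
  using arccos_kernel_antimono[of x pi] arccos_kernel_antimono[of 0 x] assms
  by (auto simp: arccos_kernel_def)

lemma gfun_bounds:
  assumes "0 \<le> x" "x \<le> pi"
  shows "0 \<le> gfun x" "gfun x \<le> pi / 2"
  using arccos_kernel_bounds[OF assms] arccos_le_arccos[of 0 "arccos_kernel x"]
  by (auto simp: gfun_eq_arccos_kernel intro!: arccos_lbound)

lemma gfun_pos:
  assumes "0 < x" "x \<le> pi"
  shows "0 < gfun x"
  using arccos_kernel_bounds[of x] arccos_kernel_less_1[OF assms] assms
    arccos_less_arccos[of "arccos_kernel x" 1]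
  by (simp add: gfun_eq_arccos_kernel)

lemma gfun_mono:
  assumes "0 \<le> x" "x \<le> y" "y \<le> pi"
  shows "gfun x \<le> gfun y"
  unfolding gfun_eq_arccos_kernel using assms arccos_kernel_bounds[of x] arccos_kernel_bounds[of y]
  by (intro arccos_le_arccos arccos_kernel_antimono) auto

lemma gfun_differentiable:
  assumes "0 < x" "x < pi"
  shows "gfun differentiable (at x)"
proof -
  have "((\<lambda>t. arccos (arccos_kernel t)) has_real_derivative
      inverse (- sqrt (1 - (arccos_kernel x)\<^sup>2)) * (- (pi - x) * sin x / pi)) (at x)"
    using arccos_kernel_bounds[of x] arccos_kernel_less_1[of x] assms
    by (intro DERIV_chain2[OF DERIV_arccos arccos_kernel_has_real_derivative]) auto
  then show ?thesis
    unfolding gfun_eq_arccos_kernel[abs_def] real_differentiable_def by blast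
qed

lemma gfun_iter_bounds:
  assumes "0 \<le> x" "x \<le> pi"
  shows "0 \<le> (gfun ^^ n) x \<and> (gfun ^^ n) x \<le> pi"
  by (induction n) (use assms gfun_bounds in fastforce)+

lemma gfun_iter_mono:
  assumes "0 \<le> x" "x \<le> y" "y \<le> pi"
  shows "(gfun ^^ n) x \<le> (gfun ^^ n) y"
  by (induction n) (use assms gfun_iter_bounds[of x] gfun_iter_bounds[of y] in \<open>auto intro!: gfun_mono\<close>)

lemma cos_gfun_iter_pi_le:
  assumes "0 \<le> x" "x \<le> pi"
  shows "cos ((gfun ^^ n) pi) \<le> cos ((gfun ^^ n) x)"
  using gfun_iter_bounds[of x n] gfun_iter_bounds[of pi n] gfun_iter_mono[of x pi n] assms
  by (intro cos_monotone_0_pi_le) auto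

lemma gfun_iter_differentiable:
  assumes "0 < x" "x < pi"
  shows "(gfun ^^ n) differentiable (at x) \<and> 0 < (gfun ^^ n) x \<and> (gfun ^^ n) x < pi"
proof (induction n)
  case (Suc n)
  then have "(gfun \<circ> (gfun ^^ n)) differentiable (at x)"
    by (intro differentiable_chain_at gfun_differentiable) auto
  moreover have "0 < gfun ((gfun ^^ n) x)" "gfun ((gfun ^^ n) x) < pi"
    using Suc gfun_pos gfun_bounds[of "(gfun ^^ n) x"] pi_gt_zero by auto
  ultimately show ?case unfolding funpow.simps comp_apply by blast
qed (use assms in simp)

section \<open>Differentiability and radial gradient of \<open>L\<close>\<close>

lemma theta_bounds: "0 \<le> theta e x" "theta e x \<le> pi"
proof -
  have "\<bar>x \<bullet> e\<bar> \<le> norm x * norm e" by (rule Cauchy_Schwarz_ineq2)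
  then have "\<bar>(x \<bullet> e) / (norm x * norm e)\<bar> \<le> 1"
    by (cases "norm x * norm e = 0") (auto simp: abs_divide divide_le_eq_1)
  then have "-1 \<le> (x \<bullet> e) / (norm x * norm e)" "(x \<bullet> e) / (norm x * norm e) \<le> 1"
    by linarith+
  then show "0 \<le> theta e x" "theta e x \<le> pi"
    unfolding theta_def by (auto intro!: arccos_lbound arccos_ubound)
qed

lemma theta_scaleR: "r > 0 \<Longrightarrow> theta e (r *\<^sub>R x) = theta e x"
  by (simp add: theta_def)

lemma Lfun_scaleR:
  assumes "r > 0"
  shows "Lfun d e (r *\<^sub>R y) =
    (1/2) * r\<^sup>2 * (norm y)\<^sup>2 - r * norm y * cos ((gfun ^^ d) (theta e y)) + 1/2"
  using assms by (simp add: Lfun_def theta_scaleR power_mult_distrib)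

lemma Lfun_gradient_inner_self:
  assumes y: "y \<noteq> 0" and D: "(Lfun d e has_derivative (\<lambda>h. v \<bullet> h)) (at y)"
  shows "v \<bullet> y = norm y * (norm y - cos ((gfun ^^ d) (theta e y)))"
proof -
  define C where "C = cos ((gfun ^^ d) (theta e y))"
  have ray: "((\<lambda>s::real. (1 + s) *\<^sub>R y) has_derivative (\<lambda>h. h *\<^sub>R y)) (at 0)"
    by (auto intro!: derivative_eq_intros)
  have "(Lfun d e has_derivative (\<lambda>h. v \<bullet> h)) (at ((1 + 0) *\<^sub>R y))"
    using D by simp
  from has_derivative_compose[OF ray this]
  have "((\<lambda>s. Lfun d e ((1 + s) *\<^sub>R y)) has_derivative (\<lambda>h. v \<bullet> (h *\<^sub>R y))) (at 0)"
    by (simp add: comp_def)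
  then have dv: "((\<lambda>s. Lfun d e ((1 + s) *\<^sub>R y)) has_real_derivative v \<bullet> y) (at 0)"
    by (simp add: has_field_derivative_def mult.commute[of _ "v \<bullet> y"])
  have "((\<lambda>s. (1/2) * (1 + s)\<^sup>2 * (norm y)\<^sup>2 - (1 + s) * norm y * C + 1/2) has_real_derivative
      (norm y)\<^sup>2 - norm y * C) (at 0)"
    by (auto intro!: derivative_eq_intros simp: power2_eq_square)
  then have "((\<lambda>s. Lfun d e ((1 + s) *\<^sub>R y)) has_real_derivative (norm y)\<^sup>2 - norm y * C) (at 0)"
    by (rule has_field_derivative_transform_within_open[where S="{-1<..<1}"])
       (auto simp: Lfun_scaleR C_def)
  with dv show ?thesis
    by (simp add: DERIV_unique C_def power2_eq_square right_diff_distrib)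
qed

lemma differentiable_imp_has_gradient:
  fixes f :: "'a::euclidean_space \<Rightarrow> real"
  assumes "f differentiable (at y)"
  obtains v where "(f has_derivative (\<lambda>h. v \<bullet> h)) (at y)"
proof -
  obtain D where D: "(f has_derivative D) (at y)" using assms by (auto simp: differentiable_def)
  have "D h = adjoint D 1 \<bullet> h" for h
    using adjoint_works[OF has_derivative_linear[OF D], of h 1] by (simp add: inner_commute)
  with D show ?thesis using that by (metis (no_types, lifting) ext)
qed

lemma Lfun_differentiable_off_axis:
  fixes x e :: "'a::euclidean_space"
  assumes e: "e \<in> Basis" and x: "x \<noteq> 0" and off_axis: "\<bar>x \<bullet> e\<bar> < norm x"
  shows "Lfun d e differentiable (at x)"
proof -
  define u where "u y = (y \<bullet> e) / (norm y * norm e)" for y :: 'a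
  have u_diff: "u differentiable (at x)"
    unfolding u_def[abs_def] using x e
    by (intro differentiable_divide differentiable_inner differentiable_mult)
       (auto simp: differentiable_norm_at)
  have u_bounds: "-1 < u x" "u x < 1"
    using off_axis x e by (auto simp: u_def abs_less_iff field_simps)
  then have "arccos differentiable (at (u x))"
    using DERIV_arccos real_differentiable_def by blast
  then have theta_diff: "(\<lambda>y. arccos (u y)) differentiable (at x)"
    by (rule differentiable_compose[OF _ u_diff])
  have "0 < arccos (u x)" "arccos (u x) < pi"
    using u_bounds arccos_less_arccos[of "u x" 1] arccos_less_arccos[of "-1" "u x"] by auto
  then have "(gfun ^^ d) differentiable (at (arccos (u x)))"
    using gfun_iter_differentiable by blast
  then have gd_diff: "(\<lambda>y. (gfun ^^ d) (arccos (u y))) differentiable (at x)"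
    by (rule differentiable_compose[OF _ theta_diff])
  have "cos differentiable (at ((gfun ^^ d) (arccos (u x))))"
    using DERIV_cos real_differentiable_def by blast
  then have "(\<lambda>y. cos ((gfun ^^ d) (arccos (u y)))) differentiable (at x)"
    by (rule differentiable_compose[OF _ gd_diff])
  then have "(\<lambda>y. (1/2) * (norm y)\<^sup>2 - norm y * cos ((gfun ^^ d) (arccos (u y))) + 1/2)
      differentiable (at x)"
    using x by (intro differentiable_add differentiable_diff differentiable_mult differentiable_power)
      (auto simp: differentiable_norm_at)
  moreover have "Lfun d e = (\<lambda>y. (1/2) * (norm y)\<^sup>2 - norm y * cos ((gfun ^^ d) (arccos (u y))) + 1/2)"
    by (simp add: fun_eq_iff Lfun_def theta_def u_def)
  ultimately show ?thesis by simp
qed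

text \<open>On the line \<open>\<theta>\<close> only takes the values \<open>0\<close> and \<open>pi\<close> and is constant near each
  \<open>x \<noteq> 0\<close>, so \<open>L\<close> agrees locally with the smooth function
  \<open>\<lambda>y. \<parallel>y\<parallel>\<^sup>2/2 - \<parallel>y\<parallel> C + 1/2\<close>.\<close>
lemma Lfun_differentiable_DIM_1:
  fixes x e :: "'a::euclidean_space"
  assumes e: "e \<in> Basis" and x: "x \<noteq> 0" and dim: "DIM('a) = 1"
  shows "Lfun d e differentiable (at x)"
proof -
  obtain b where "Basis = {b::'a}"
    using dim card_1_singletonE by blast
  with e have Basis: "Basis = {e}" by (metis singletonD)
  then have decomp: "y = (y \<bullet> e) *\<^sub>R e" for y :: 'a
    using euclidean_representation[of y] unfolding Basis by simp
  have norm_eq: "norm y = \<bar>y \<bullet> e\<bar>" for y :: 'a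
    using e by (metis decomp norm_scaleR norm_Basis mult_1_right)
  define S where "S = {y::'a. 0 < (y \<bullet> e) * (x \<bullet> e)}"
  have "open S" unfolding S_def by (intro open_Collect_less continuous_intros)
  have "x \<bullet> e \<noteq> 0"
    using x decomp[of x] by (metis scale_zero_left)
  then have "x \<in> S"
    by (auto simp: S_def zero_less_mult_iff linorder_neq_iff)
  define C where "C = cos ((gfun ^^ d) (theta e x))"
  have L_eq: "Lfun d e y = (1/2) * (norm y)\<^sup>2 - norm y * C + 1/2" if "y \<in> S" for y
  proof -
    have "sgn (y \<bullet> e) = sgn (x \<bullet> e)"
      using that by (auto simp: S_def sgn_if zero_less_mult_iff)
    then have "theta e y = theta e x"
      using e by (simp add: theta_def norm_eq flip: real_sgn_eq)
    then show ?thesis by (simp add: Lfun_def C_def)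
  qed
  have "(\<lambda>y. (1/2) * (norm y)\<^sup>2 - norm y * C + 1/2) differentiable (at x)"
    using x by (intro differentiable_add differentiable_diff differentiable_mult differentiable_power)
      (auto simp: differentiable_norm_at)
  then obtain D where "((\<lambda>y. (1/2) * (norm y)\<^sup>2 - norm y * C + 1/2) has_derivative D) (at x)"
    by (auto simp: differentiable_def)
  then have "(Lfun d e has_derivative D) (at x)"
    by (rule has_derivative_transform_within_open[OF _ \<open>open S\<close> \<open>x \<in> S\<close>]) (simp add: L_eq)
  then show ?thesis by (rule differentiableI)
qed

text \<open>A Lebesgue null set containing every point where \<open>L\<close> may fail to be differentiable. In
  dimension one the axis through \<open>e\<close> is the whole space, and only the origin is needed.\<close>
definition axis_set :: "'a::euclidean_space \<Rightarrow> 'a set" where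
  "axis_set e = (if DIM('a) = 1 then {0} else span {e})"

lemma abs_inner_Basis_less_norm:
  fixes x e :: "'a::euclidean_space"
  assumes e: "e \<in> Basis" and x: "x \<notin> span {e}"
  shows "\<bar>x \<bullet> e\<bar> < norm x"
proof -
  have "\<bar>x \<bullet> e\<bar> \<noteq> norm x * norm e"
  proof
    assume "\<bar>x \<bullet> e\<bar> = norm x * norm e"
    then have "norm x *\<^sub>R e = x \<or> norm x *\<^sub>R e = - x"
      using norm_cauchy_schwarz_abs_eq[of x e] e by auto
    then have "x = norm x *\<^sub>R e \<or> x = (- norm x) *\<^sub>R e" by auto
    moreover have "c *\<^sub>R e \<in> span {e}" for c
      by (simp add: span_base span_scale)
    ultimately show False
      using x by metis
  qed
  then show ?thesis
    using Cauchy_Schwarz_ineq2[of x e] e by simp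
qed

lemma Lfun_differentiable_off_axis_set:
  fixes x e :: "'a::euclidean_space"
  assumes e: "e \<in> Basis" and x: "x \<notin> axis_set e"
  shows "x \<noteq> 0" "Lfun d e differentiable (at x)"
proof -
  show "x \<noteq> 0"
    using x span_zero[of "{e}"] by (auto simp: axis_set_def split: if_splits)
  then show "Lfun d e differentiable (at x)"
  proof (cases "DIM('a) = 1")
    case False
    with x have "x \<notin> span {e}" by (simp add: axis_set_def)
    with e \<open>x \<noteq> 0\<close> show ?thesis
      by (intro Lfun_differentiable_off_axis abs_inner_Basis_less_norm)
  qed (use e Lfun_differentiable_DIM_1 in blast)
qed

lemma axis_set_null:
  fixes e :: "'a::euclidean_space"
  assumes e: "e \<in> Basis"
  shows "axis_set e \<in> null_sets lborel"
proof (cases "DIM('a) = 1")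
  case False
  have "dim (span {e}) = 1"
    using e by (simp add: dim_span nonzero_Basis)
  then have "dim (span {e}) < DIM('a)"
    using False DIM_positive[where 'a='a] by linarith
  then have "negligible (span {e})"
    by (rule negligible_lowdim)
  then have "span {e} \<in> null_sets lebesgue"
    by (simp add: negligible_iff_null_sets)
  then have "span {e} \<in> null_sets lborel"
    by (simp add: null_sets_completion_iff closed_subspace borel_closed)
  with False show ?thesis by (simp add: axis_set_def)
qed (simp add: axis_set_def finite_imp_null_set_lborel)

lemma inner_le_norm_of_norm_le_1:
  fixes x u :: "'a::real_inner"
  assumes "norm u \<le> 1"
  shows "x \<bullet> u \<le> norm x"
proof -
  have "x \<bullet> u \<le> norm x * norm u"
    using norm_cauchy_schwarz by blast
  also have "\<dots> \<le> norm x"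
    using assms by (simp add: mult_left_le)
  finally show ?thesis .
qed

lemma norm_gradient_step_ge:
  fixes x z e :: "'a::euclidean_space" and F :: "'a \<Rightarrow> 'a"
  assumes e: "e \<in> Basis" and x: "x \<notin> axis_set e"
    and F_close: "\<And>y v. (Lfun d e has_derivative (\<lambda>h. v \<bullet> h)) (at y) \<Longrightarrow>
                   norm (F y - v) \<le> c * (norm y + 1)"
    and "0 \<le> c" "0 < eta"
  shows "(1 - eta - eta * c) * norm x + eta * (cos ((gfun ^^ d) pi) - c) + z \<bullet> sgn x
    \<le> norm (x - eta *\<^sub>R F x + z)"
proof -
  have "x \<noteq> 0" and "Lfun d e differentiable (at x)"
    using Lfun_differentiable_off_axis_set[OF e x] by auto
  then obtain v where v: "(Lfun d e has_derivative (\<lambda>h. v \<bullet> h)) (at x)"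
    using differentiable_imp_has_gradient by blast
  define u where "u = sgn x"
  have norm_u: "norm u = 1" and x_u: "x \<bullet> u = norm x"
    using \<open>x \<noteq> 0\<close> by (simp_all add: u_def norm_sgn sgn_div_norm dot_square_norm power2_eq_square)
  have "v \<bullet> u = norm x - cos ((gfun ^^ d) (theta e x))"
    using Lfun_gradient_inner_self[OF \<open>x \<noteq> 0\<close> v] \<open>x \<noteq> 0\<close>
    by (simp add: u_def sgn_div_norm)
  also have "\<dots> \<le> norm x - cos ((gfun ^^ d) pi)"
    using cos_gfun_iter_pi_le[OF theta_bounds] by simp
  finally have "F x \<bullet> u \<le> norm x - cos ((gfun ^^ d) pi) + c * (norm x + 1)"
    using inner_le_norm_of_norm_le_1[of u "F x - v"] F_close[OF v] norm_u
    by (simp add: inner_diff_left)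
  then have "eta * (F x \<bullet> u) \<le> eta * (norm x - cos ((gfun ^^ d) pi) + c * (norm x + 1))"
    using \<open>0 < eta\<close> by (intro mult_left_mono) auto
  then have "(1 - eta - eta * c) * norm x + eta * (cos ((gfun ^^ d) pi) - c) + z \<bullet> u
      \<le> (x - eta *\<^sub>R F x + z) \<bullet> u"
    using x_u by (simp add: inner_diff_left inner_add_left algebra_simps)
  also have "\<dots> \<le> norm (x - eta *\<^sub>R F x + z)"
    using norm_u by (intro inner_le_norm_of_norm_le_1) simp
  finally show ?thesis by (simp add: u_def)
qed

section \<open>Laplace transforms of Gaussian densities\<close>

lemma nn_integral_normal_density:
  "s > 0 \<Longrightarrow> (\<integral>\<^sup>+ t. ennreal (normal_density m s t) \<partial>lborel) = 1"
  using prob_space.emeasure_space_1[OF prob_space_normal_density[of s m]]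
  by (simp add: emeasure_density)

lemma nn_integral_normal_density_exp:
  fixes s m :: real
  assumes s: "s > 0"
  shows "(\<integral>\<^sup>+ t. ennreal (normal_density 0 s t * exp (- m * t)) \<partial>lborel) = ennreal (exp (m\<^sup>2 * s\<^sup>2 / 2))"
proof -
  have shift: "normal_density 0 s t * exp (- m * t) = exp (m\<^sup>2 * s\<^sup>2 / 2) * normal_density (- m * s\<^sup>2) s t"
    for t
  proof -
    have "- (t - 0)\<^sup>2 / (2 * s\<^sup>2) + - m * t = m\<^sup>2 * s\<^sup>2 / 2 + - (t - - m * s\<^sup>2)\<^sup>2 / (2 * s\<^sup>2)"
      using s by (simp add: field_simps power2_eq_square)
    then show ?thesis
      unfolding normal_density_def by (simp add: exp_add[symmetric] ac_simps)
  qed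
  have "(\<integral>\<^sup>+ t. ennreal (normal_density 0 s t * exp (- m * t)) \<partial>lborel)
      = (\<integral>\<^sup>+ t. ennreal (exp (m\<^sup>2 * s\<^sup>2 / 2)) * ennreal (normal_density (- m * s\<^sup>2) s t) \<partial>lborel)"
    by (intro nn_integral_cong, subst shift, rule ennreal_mult) auto
  also have "\<dots> = ennreal (exp (m\<^sup>2 * s\<^sup>2 / 2))"
    by (simp add: nn_integral_cmult nn_integral_normal_density[OF s])
  finally show ?thesis .
qed

lemma norm_squared_eq_sum_Basis:
  fixes w :: "'a::euclidean_space"
  shows "(norm w)\<^sup>2 = (\<Sum>b\<in>Basis. (w \<bullet> b)\<^sup>2)"
  by (subst power2_norm_eq_inner, subst euclidean_inner) (simp add: power2_eq_square)

lemma gauss_dens_mult_exp_inner: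
  fixes v u :: "'a::euclidean_space"
  assumes s: "s > 0"
  shows "gauss_dens s v * exp (- lam * (v \<bullet> u)) =
    (\<Prod>b\<in>Basis. normal_density 0 s (v \<bullet> b) * exp (- (lam * (u \<bullet> b)) * (v \<bullet> b)))"
proof -
  define X where "X = 2 * pi * s\<^sup>2"
  have X: "X > 0" using s by (simp add: X_def)
  have const: "X powr (- real DIM('a) / 2) = (\<Prod>b\<in>(Basis::'a set). 1 / sqrt X)"
  proof -
    have "(\<Prod>b\<in>(Basis::'a set). 1 / sqrt X) = (X powr (- 1/2)) ^ DIM('a)"
      using X by (simp add: powr_half_sqrt powr_minus_divide)
    also have "\<dots> = X powr (- real DIM('a) / 2)"
      using X by (simp add: powr_realpow[symmetric] powr_powr)
    finally show ?thesis by simp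
  qed
  have quad: "- (norm v)\<^sup>2 / (2 * s\<^sup>2) = (\<Sum>b\<in>Basis. - (v \<bullet> b)\<^sup>2 / (2 * s\<^sup>2))"
    by (simp add: norm_squared_eq_sum_Basis sum_divide_distrib sum_negf)
  have lin: "- lam * (v \<bullet> u) = (\<Sum>b\<in>Basis. - (lam * (u \<bullet> b)) * (v \<bullet> b))"
    by (simp add: euclidean_inner[of v u] sum_distrib_left algebra_simps)
  have "gauss_dens s v * exp (- lam * (v \<bullet> u)) =
     X powr (- real DIM('a) / 2) * exp (- (norm v)\<^sup>2 / (2 * s\<^sup>2)) * exp (- lam * (v \<bullet> u))"
    unfolding gauss_dens_def X_def by simp
  also have "\<dots> = (\<Prod>b\<in>Basis. 1 / sqrt X * exp (- (v \<bullet> b)\<^sup>2 / (2 * s\<^sup>2))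
      * exp (- (lam * (u \<bullet> b)) * (v \<bullet> b)))"
    by (simp only: const quad lin exp_sum finite_Basis prod.distrib)
  also have "\<dots> = (\<Prod>b\<in>Basis. normal_density 0 s (v \<bullet> b) * exp (- (lam * (u \<bullet> b)) * (v \<bullet> b)))"
    by (simp add: normal_density_def X_def)
  finally show ?thesis .
qed

lemma nn_integral_gauss_dens_exp_inner:
  fixes u :: "'a::euclidean_space"
  assumes s: "s > 0"
  shows "(\<integral>\<^sup>+ v. ennreal (gauss_dens s v) * ennreal (exp (- lam * (v \<bullet> u))) \<partial>lborel)
    = ennreal (exp (lam\<^sup>2 * s\<^sup>2 * (norm u)\<^sup>2 / 2))"
proof -
  have "(\<integral>\<^sup>+ v. ennreal (gauss_dens s v) * ennreal (exp (- lam * (v \<bullet> u))) \<partial>lborel)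
     = (\<integral>\<^sup>+ v. (\<Prod>b\<in>Basis. ennreal (normal_density 0 s (v \<bullet> b) * exp (- (lam * (u \<bullet> b)) * (v \<bullet> b))))
       \<partial>lborel)"
  proof (intro nn_integral_cong)
    fix v :: 'a
    have "ennreal (gauss_dens s v) * ennreal (exp (- lam * (v \<bullet> u)))
        = ennreal (gauss_dens s v * exp (- lam * (v \<bullet> u)))"
      by (rule ennreal_mult[symmetric]) (simp_all add: gauss_dens_def)
    then show "ennreal (gauss_dens s v) * ennreal (exp (- lam * (v \<bullet> u)))
        = (\<Prod>b\<in>Basis. ennreal (normal_density 0 s (v \<bullet> b) * exp (- (lam * (u \<bullet> b)) * (v \<bullet> b))))"
      using gauss_dens_mult_exp_inner[OF s, of v lam u] by (simp add: prod_ennreal)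
  qed
  also have "\<dots> = (\<Prod>b\<in>Basis. \<integral>\<^sup>+ t. ennreal (normal_density 0 s t * exp (- (lam * (u \<bullet> b)) * t)) \<partial>lborel)"
    by (rule nn_integral_lborel_prod) auto
  also have "\<dots> = (\<Prod>b\<in>Basis. ennreal (exp ((lam * (u \<bullet> b))\<^sup>2 * s\<^sup>2 / 2)))"
    by (intro prod.cong refl nn_integral_normal_density_exp[OF s])
  also have "\<dots> = ennreal (exp (lam\<^sup>2 * s\<^sup>2 * (norm u)\<^sup>2 / 2))"
    by (simp add: prod_ennreal exp_sum norm_squared_eq_sum_Basis power_mult_distrib
        sum_distrib_left sum_divide_distrib algebra_simps)
  finally show ?thesis .
qed

lemma borel_measurable_gauss_dens[measurable]: "gauss_dens s \<in> borel_measurable borel"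
  unfolding gauss_dens_def[abs_def] by measurable

lemma distr_borel_eq_density:
  "distributed M lborel Z g \<Longrightarrow> distr M borel Z = density lborel g"
  using distr_cong[of M M borel lborel Z Z] by (simp add: distributed_def)

lemma nn_integral_exp_inner_gaussian:
  fixes Z :: "'w \<Rightarrow> 'a::euclidean_space"
  assumes Z: "distributed M lborel Z (\<lambda>v. ennreal (gauss_dens s v))" and s: "s > 0"
  shows "(\<integral>\<^sup>+ v. ennreal (exp (- lam * (v \<bullet> u))) \<partial>distr M borel Z)
    = ennreal (exp (lam\<^sup>2 * s\<^sup>2 * (norm u)\<^sup>2 / 2))"
  unfolding distr_borel_eq_density[OF Z]
  using nn_integral_gauss_dens_exp_inner[OF s, of lam u] by (subst nn_integral_density) simp_all

section \<open>Independent noise\<close>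

lemma (in prob_space) nn_integral_indep_var_pair:
  assumes I: "indep_var borel X borel Z"
    and H: "H \<in> borel_measurable (borel \<Otimes>\<^sub>M borel)"
  shows "(\<integral>\<^sup>+ w. H (X w, Z w) \<partial>M) = (\<integral>\<^sup>+ w. (\<integral>\<^sup>+ v. H (X w, v) \<partial>distr M borel Z) \<partial>M)"
proof -
  have X: "X \<in> borel_measurable M" and Z: "Z \<in> borel_measurable M"
    using indep_var_rv1[OF I] indep_var_rv2[OF I] by auto
  interpret Z: prob_space "distr M borel Z" by (rule prob_space_distr[OF Z])
  have H_XZ: "H \<in> borel_measurable (distr M borel X \<Otimes>\<^sub>M distr M borel Z)"
    using H by (simp cong: measurable_cong_sets[OF sets_pair_measure_cong[OF sets_distr sets_distr] refl])
  have "H \<in> borel_measurable (borel \<Otimes>\<^sub>M distr M borel Z)"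
    using H by (simp cong: measurable_cong_sets[OF sets_pair_measure_cong[OF refl sets_distr] refl])
  then have inner: "(\<lambda>a. \<integral>\<^sup>+ v. H (a, v) \<partial>distr M borel Z) \<in> borel_measurable borel"
    by (rule Z.borel_measurable_nn_integral_fst)
  have "(\<integral>\<^sup>+ w. H (X w, Z w) \<partial>M) = integral\<^sup>N (distr M (borel \<Otimes>\<^sub>M borel) (\<lambda>w. (X w, Z w))) H"
    using X Z H by (subst nn_integral_distr) (auto intro: measurable_Pair)
  also have "\<dots> = integral\<^sup>N (distr M borel X \<Otimes>\<^sub>M distr M borel Z) H"
    using I by (simp add: indep_var_distribution_eq)
  also have "\<dots> = (\<integral>\<^sup>+ a. \<integral>\<^sup>+ v. H (a, v) \<partial>distr M borel Z \<partial>distr M borel X)"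
    by (rule Z.nn_integral_fst[OF H_XZ, symmetric])
  also have "\<dots> = (\<integral>\<^sup>+ w. (\<integral>\<^sup>+ v. H (X w, v) \<partial>distr M borel Z) \<partial>M)"
    using X inner by (subst nn_integral_distr) auto
  finally show ?thesis .
qed

lemma (in prob_space) AE_add_indep_density_notin_null_set:
  fixes X Z :: "'a \<Rightarrow> 'b::euclidean_space"
  assumes I: "indep_var borel X borel Z" and Z: "distributed M lborel Z g"
    and N: "N \<in> null_sets lborel" and G: "G \<in> borel_measurable borel"
  shows "AE w in M. G (X w) + Z w \<notin> N"
proof -
  have X: "X \<in> borel_measurable M" and Zm: "Z \<in> borel_measurable M"
    using indep_var_rv1[OF I] indep_var_rv2[OF I] by auto
  have [measurable]: "N \<in> sets borel" using N by (auto simp: null_sets_def)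
  note [measurable] = G X Zm
  have translate_null: "(\<integral>\<^sup>+ v. indicator N (y + v) \<partial>distr M borel Z) = 0" for y :: 'b
  proof -
    have "{v. v - (- y) \<in> N} \<in> null_sets lborel"
      by (rule null_sets_translation[OF N])
    then have "AE v in lborel. g v * indicator N (y + v) = 0"
      by (rule AE_not_in[THEN AE_mp]) (simp add: add.commute)
    then show ?thesis
      unfolding distr_borel_eq_density[OF Z]
      using distributed_borel_measurable[OF Z]
      by (subst nn_integral_density) (auto simp: nn_integral_0_iff_AE)
  qed
  have "(\<integral>\<^sup>+ w. indicator N (G (X w) + Z w) \<partial>M) =
      (\<integral>\<^sup>+ w. (\<integral>\<^sup>+ v. indicator N (G (X w) + v) \<partial>distr M borel Z) \<partial>M)"
    by (intro nn_integral_indep_var_pair[OF I, where H="\<lambda>p. indicator N (G (fst p) + snd p)",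
        simplified]) measurable
  also have "\<dots> = 0"
    by (simp add: translate_null)
  finally have "AE w in M. (indicator N (G (X w) + Z w) :: ennreal) = 0"
    by (subst (asm) nn_integral_0_iff_AE) measurable
  then show ?thesis
    by eventually_elim (simp add: indicator_eq_0_iff)
qed

primrec gd_iterate :: "real \<Rightarrow> ('a::euclidean_space \<Rightarrow> 'a) \<Rightarrow> 'a \<Rightarrow> nat \<Rightarrow> (nat \<Rightarrow> 'a) \<Rightarrow> 'a" where
  "gd_iterate eta F x0 0 noise = x0"
| "gd_iterate eta F x0 (Suc k) noise =
    gd_iterate eta F x0 k noise - eta *\<^sub>R F (gd_iterate eta F x0 k noise) + noise (Suc k)"

lemma gd_iterate_measurable:
  assumes F: "F \<in> borel_measurable borel" and "k \<le> n"
  shows "gd_iterate eta F x0 k \<in> borel_measurable (Pi\<^sub>M {1..n} (\<lambda>_. borel))"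
  using \<open>k \<le> n\<close>
proof (induction k)
  case 0
  have "gd_iterate eta F x0 0 = (\<lambda>_. x0)" by (rule ext) simp
  then show ?case by simp
next
  case (Suc k)
  then have "(\<lambda>f. f (Suc k)) \<in> borel_measurable (Pi\<^sub>M {1..n} (\<lambda>_. borel))"
    by (intro measurable_component_singleton) auto
  with Suc F show ?case
    using measurable_compose[of "gd_iterate eta F x0 k" _ borel F] by (simp add: comp_def)
qed

lemma gd_iterate_cong:
  "(\<And>i. i \<in> {1..k} \<Longrightarrow> f i = g i) \<Longrightarrow> gd_iterate eta F x0 k f = gd_iterate eta F x0 k g"
  by (induction k) auto

lemma (in prob_space) indep_var_gd_iterate_noise:
  fixes z :: "nat \<Rightarrow> 'a \<Rightarrow> 'b::euclidean_space"
  assumes z: "indep_vars (\<lambda>_. borel) z {1..}" and F: "F \<in> borel_measurable borel"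
  shows "indep_var borel (\<lambda>w. gd_iterate eta F x0 k (\<lambda>i. z i w)) borel (z (Suc k))"
proof -
  have "indep_var (Pi\<^sub>M {1..k} (\<lambda>_. borel)) (\<lambda>w. restrict (\<lambda>i. z i w) {1..k})
      (Pi\<^sub>M {Suc k} (\<lambda>_. borel)) (\<lambda>w. restrict (\<lambda>i. z i w) {Suc k})"
    by (rule indep_var_restrict[OF z]) auto
  then have "indep_var borel (gd_iterate eta F x0 k \<circ> (\<lambda>w. restrict (\<lambda>i. z i w) {1..k}))
      borel ((\<lambda>f. f (Suc k)) \<circ> (\<lambda>w. restrict (\<lambda>i. z i w) {Suc k}))"
    by (rule indep_var_compose[OF _ gd_iterate_measurable[OF F order_refl] measurable_component_singleton]) simp
  moreover have "gd_iterate eta F x0 k \<circ> (\<lambda>w. restrict (\<lambda>i. z i w) {1..k}) =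
      (\<lambda>w. gd_iterate eta F x0 k (\<lambda>i. z i w))"
    by (auto simp: fun_eq_iff intro!: gd_iterate_cong)
  ultimately show ?thesis
    by (simp add: comp_def)
qed

lemma (in prob_space) AE_gd_iterate_notin_null_set:
  fixes z :: "nat \<Rightarrow> 'a \<Rightarrow> 'b::euclidean_space"
  assumes z: "indep_vars (\<lambda>_. borel) z {1..}"
    and Z: "distributed M lborel (z (Suc k)) g"
    and F: "F \<in> borel_measurable borel" and N: "N \<in> null_sets lborel"
  shows "AE w in M. gd_iterate eta F x0 (Suc k) (\<lambda>i. z i w) \<notin> N"
  using AE_add_indep_density_notin_null_set[OF indep_var_gd_iterate_noise[OF z F] Z N,
      of "\<lambda>y. y - eta *\<^sub>R F y"] F
  by simp measurable

section \<open>Laplace transform of the iterates\<close>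

lemma (in prob_space) nn_integral_exp_neg_norm_step:
  fixes X Y Z :: "'a \<Rightarrow> 'b::euclidean_space"
  assumes I: "indep_var borel X borel Z"
    and Z: "distributed M lborel Z (\<lambda>v. ennreal (gauss_dens s v))" and s: "s > 0"
    and dom: "AE w in M. q * norm (X w) + b + Z w \<bullet> sgn (X w) \<le> norm (Y w)"
    and lam: "0 \<le> lam"
  shows "(\<integral>\<^sup>+ w. ennreal (exp (- lam * norm (Y w))) \<partial>M)
    \<le> ennreal (exp (- lam * b + lam\<^sup>2 * s\<^sup>2 / 2)) * (\<integral>\<^sup>+ w. ennreal (exp (- (q * lam) * norm (X w))) \<partial>M)"
proof -
  have [measurable]: "X \<in> borel_measurable M"
    using indep_var_rv1[OF I] by simp
  define K where "K y = - lam * (q * norm y + b)" for y :: 'b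
  define H where "H p = ennreal (exp (K (fst p) - lam * (snd p \<bullet> sgn (fst p))))" for p :: "'b \<times> 'b"
  have [measurable]: "H \<in> borel_measurable (borel \<Otimes>\<^sub>M borel)"
    unfolding H_def K_def by measurable
  have "(\<integral>\<^sup>+ w. ennreal (exp (- lam * norm (Y w))) \<partial>M) \<le> (\<integral>\<^sup>+ w. H (X w, Z w) \<partial>M)"
    using dom
  proof (intro nn_integral_mono_AE, elim eventually_mono)
    fix w assume "q * norm (X w) + b + Z w \<bullet> sgn (X w) \<le> norm (Y w)"
    then have "lam * (q * norm (X w) + b + Z w \<bullet> sgn (X w)) \<le> lam * norm (Y w)"
      using lam by (rule mult_left_mono)
    then show "ennreal (exp (- lam * norm (Y w))) \<le> H (X w, Z w)"
      by (simp add: H_def K_def algebra_simps)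
  qed
  also have "\<dots> = (\<integral>\<^sup>+ w. (\<integral>\<^sup>+ v. H (X w, v) \<partial>distr M borel Z) \<partial>M)"
    by (rule nn_integral_indep_var_pair[OF I]) measurable
  also have "\<dots> \<le> (\<integral>\<^sup>+ w. ennreal (exp (K (X w))) * ennreal (exp (lam\<^sup>2 * s\<^sup>2 / 2)) \<partial>M)"
  proof (rule nn_integral_mono)
    fix w
    have "(\<integral>\<^sup>+ v. H (X w, v) \<partial>distr M borel Z)
        = ennreal (exp (K (X w))) * (\<integral>\<^sup>+ v. ennreal (exp (- lam * (v \<bullet> sgn (X w)))) \<partial>distr M borel Z)"
      by (subst nn_integral_cmult[symmetric])
        (simp_all add: H_def exp_diff exp_minus ennreal_mult[symmetric] field_simps)
    also have "\<dots> = ennreal (exp (K (X w))) * ennreal (exp (lam\<^sup>2 * s\<^sup>2 * (norm (sgn (X w)))\<^sup>2 / 2))"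
      by (simp only: nn_integral_exp_inner_gaussian[OF Z s])
    also have "\<dots> \<le> ennreal (exp (K (X w))) * ennreal (exp (lam\<^sup>2 * s\<^sup>2 / 2))"
      by (intro mult_left_mono ennreal_leI) (simp_all add: norm_sgn)
    finally show "(\<integral>\<^sup>+ v. H (X w, v) \<partial>distr M borel Z) \<le> \<dots>" .
  qed
  also have "\<dots> = (\<integral>\<^sup>+ w. ennreal (exp (- lam * b + lam\<^sup>2 * s\<^sup>2 / 2)) *
      ennreal (exp (- (q * lam) * norm (X w))) \<partial>M)"
    by (intro nn_integral_cong)
      (simp add: K_def ennreal_mult[symmetric] exp_add[symmetric] algebra_simps)
  also have "\<dots> = ennreal (exp (- lam * b + lam\<^sup>2 * s\<^sup>2 / 2)) *
      (\<integral>\<^sup>+ w. ennreal (exp (- (q * lam) * norm (X w))) \<partial>M)"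
    by (rule nn_integral_cmult) measurable
  finally show ?thesis .
qed

lemma laplace_transform_iterate_le:
  fixes m :: "nat \<Rightarrow> real \<Rightarrow> ennreal"
  assumes step: "\<And>k lam. 0 \<le> lam \<Longrightarrow> m (Suc k) lam \<le> ennreal (exp (- lam * b + lam\<^sup>2 * v)) * m k (q * lam)"
    and init: "\<And>lam. 0 \<le> lam \<Longrightarrow> m 0 lam \<le> 1"
    and q: "0 \<le> q" and lam: "0 \<le> lam"
  shows "m j lam \<le> ennreal (exp (- lam * b * (\<Sum>i<j. q ^ i) + lam\<^sup>2 * v * (\<Sum>i<j. (q\<^sup>2) ^ i)))"
  using lam
proof (induction j arbitrary: lam)
  case (Suc j)
  have "m (Suc j) lam \<le> ennreal (exp (- lam * b + lam\<^sup>2 * v)) * m j (q * lam)"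
    using step Suc.prems .
  also have "\<dots> \<le> ennreal (exp (- lam * b + lam\<^sup>2 * v)) *
      ennreal (exp (- (q * lam) * b * (\<Sum>i<j. q ^ i) + (q * lam)\<^sup>2 * v * (\<Sum>i<j. (q\<^sup>2) ^ i)))"
    using Suc q by (intro mult_left_mono) auto
  also have "\<dots> = ennreal (exp (- lam * b * (\<Sum>i<Suc j. q ^ i) + lam\<^sup>2 * v * (\<Sum>i<Suc j. (q\<^sup>2) ^ i)))"
    by (simp add: ennreal_mult[symmetric] exp_add[symmetric] sum.lessThan_Suc_shift sum_distrib_left
        power_mult_distrib sum_negf algebra_simps del: sum.lessThan_Suc)
  finally show ?case .
qed (simp add: init)

lemma (in prob_space) gd_iterate_laplace_le_geometric:
  fixes z :: "nat \<Rightarrow> 'a \<Rightarrow> 'b::euclidean_space" and F :: "'b \<Rightarrow> 'b"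
    and d :: nat and eta c sigma lam :: real
  defines "q \<equiv> 1 - eta - eta * c" and "b \<equiv> eta * (cos ((gfun ^^ d) pi) - c)"
  assumes e: "e \<in> Basis" and "0 < eta" "0 \<le> c" "0 \<le> q" "sigma > 0"
    and F: "F \<in> borel_measurable borel"
    and F_close: "\<And>y v. (Lfun d e has_derivative (\<lambda>h. v \<bullet> h)) (at y) \<Longrightarrow>
                   norm (F y - v) \<le> c * (norm y + 1)"
    and z_indep: "indep_vars (\<lambda>_. borel) z {1..}"
    and z_gauss: "\<And>k. k \<ge> 1 \<Longrightarrow> distributed M lborel (z k) (\<lambda>v. ennreal (gauss_dens sigma v))"
    and "0 \<le> lam"
  shows "(\<integral>\<^sup>+ w. ennreal (exp (- lam * norm (gd_iterate eta F x0 (Suc j) (\<lambda>i. z i w)))) \<partial>M)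
    \<le> ennreal (exp (- lam * b * (\<Sum>i<j. q ^ i) + lam\<^sup>2 * (sigma\<^sup>2 / 2) * (\<Sum>i<j. (q\<^sup>2) ^ i)))"
proof -
  define x where "x k w = gd_iterate eta F x0 k (\<lambda>i. z i w)" for k w
  have indep: "indep_var borel (x k) borel (z (Suc k))" for k
    unfolding x_def[abs_def] using indep_var_gd_iterate_noise[OF z_indep F] .
  have gauss: "distributed M lborel (z (Suc k)) (\<lambda>v. ennreal (gauss_dens sigma v))" for k
    using z_gauss by simp
  have off_axis: "AE w in M. x (Suc k) w \<notin> axis_set e" for k
    unfolding x_def using AE_gd_iterate_notin_null_set[OF z_indep gauss F axis_set_null[OF e]] .
  have "(\<integral>\<^sup>+ w. ennreal (exp (- lam * norm (x (Suc (Suc k)) w))) \<partial>M)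
      \<le> ennreal (exp (- lam * b + lam\<^sup>2 * (sigma\<^sup>2 / 2))) * (\<integral>\<^sup>+ w. ennreal (exp (- (q * lam) * norm (x (Suc k) w))) \<partial>M)"
    if "0 \<le> lam" for k lam
  proof -
    have "AE w in M. q * norm (x (Suc k) w) + b + z (Suc (Suc k)) w \<bullet> sgn (x (Suc k) w) \<le> norm (x (Suc (Suc k)) w)"
      using off_axis[of k] norm_gradient_step_ge[OF e _ F_close \<open>0 \<le> c\<close> \<open>0 < eta\<close>]
      by (auto simp: x_def q_def b_def elim!: eventually_mono)
    from nn_integral_exp_neg_norm_step[OF indep gauss \<open>sigma > 0\<close> this that]
    show ?thesis by simp
  qed
  \<comment> \<open>The recursion starts at \<open>x\<^sub>1\<close>: \<open>x\<^sub>0\<close> may lie on the axis, where the step bound is unavailable.\<close>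
  moreover have "(\<integral>\<^sup>+ w. ennreal (exp (- lam * norm (x (Suc 0) w))) \<partial>M) \<le> 1" if "0 \<le> lam" for lam
  proof -
    have "(\<integral>\<^sup>+ w. ennreal (exp (- lam * norm (x (Suc 0) w))) \<partial>M) \<le> (\<integral>\<^sup>+ w. 1 \<partial>M)"
      using that by (intro nn_integral_mono) auto
    then show ?thesis by (simp add: emeasure_space_1)
  qed
  ultimately have "(\<integral>\<^sup>+ w. ennreal (exp (- lam * norm (x (Suc j) w))) \<partial>M)
    \<le> ennreal (exp (- lam * b * (\<Sum>i<j. q ^ i) + lam\<^sup>2 * (sigma\<^sup>2 / 2) * (\<Sum>i<j. (q\<^sup>2) ^ i)))"
    using \<open>0 \<le> q\<close> \<open>0 \<le> lam\<close>
    by (rule laplace_transform_iterate_le[where m="\<lambda>k lam. \<integral>\<^sup>+ w. ennreal (exp (- lam * norm (x (Suc k) w))) \<partial>M"])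
  then show ?thesis unfolding x_def .
qed

section \<open>Drift estimates and the Chernoff bound\<close>

lemma exp_3_ge_19: "19 \<le> exp (3::real)"
proof -
  have "27/10 \<le> exp (1::real)"
    using e_approx_32 by (simp add: abs_if split: if_split_asm)
  then have "(27/10) ^ 3 \<le> exp (1::real) ^ 3"
    by (rule power_mono) simp
  moreover have "exp (1::real) ^ 3 = exp 3"
    by (simp add: exp_of_nat_mult[symmetric])
  ultimately show ?thesis
    by (simp add: power_divide)
qed

lemma one_minus_le_exp_quadratic:
  fixes h :: real
  assumes "0 \<le> h"
  shows "1 - h \<le> exp (- h - h\<^sup>2 / 2)"
proof -
  define f where "f t = exp (- t - t\<^sup>2 / 2) - (1 - t)" for t :: real
  have "f 0 \<le> f h"
  proof (rule DERIV_nonneg_imp_nondecreasing[OF assms])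
    fix t :: real assume "0 \<le> t" "t \<le> h"
    have "1 + t \<le> exp t"
      by simp
    also have "\<dots> \<le> exp (t + t\<^sup>2 / 2)"
      by simp
    finally have "(1 + t) * exp (- t - t\<^sup>2 / 2) \<le> exp (t + t\<^sup>2 / 2) * exp (- t - t\<^sup>2 / 2)"
      by (rule mult_right_mono) simp
    also have "\<dots> = 1"
      by (simp flip: exp_add)
    finally have "(1 + t) * exp (- t - t\<^sup>2 / 2) \<le> 1" .
    moreover have "(f has_real_derivative exp (- t - t\<^sup>2 / 2) * (- 1 - t) + 1) (at t)"
      unfolding f_def by (auto intro!: derivative_eq_intros simp: power2_eq_square)
    ultimately show "\<exists>D. (f has_real_derivative D) (at t) \<and> 0 \<le> D"
      by (intro exI conjI) (auto simp: algebra_simps)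
  qed
  then show ?thesis by (simp add: f_def)
qed

lemma one_minus_power_le:
  fixes eta :: real and j :: nat
  assumes "0 < eta" "eta \<le> 1/2" "3 / eta - 1 \<le> real j"
  shows "(1 - eta) ^ j \<le> 1/19"
proof -
  have "3 \<le> 3 + eta * (1 - eta) / 2"
    using assms by simp
  also have "\<dots> = (3 / eta - 1) * (eta + eta\<^sup>2 / 2)"
    using assms by (simp add: field_simps power2_eq_square)
  also have "\<dots> \<le> real j * (eta + eta\<^sup>2 / 2)"
    using assms by (intro mult_right_mono) auto
  finally have j: "3 \<le> real j * (eta + eta\<^sup>2 / 2)" .
  have "(1 - eta) ^ j \<le> exp (- eta - eta\<^sup>2 / 2) ^ j"
    using assms one_minus_le_exp_quadratic[of eta] by (intro power_mono) auto
  also have "\<dots> = exp (- (real j * (eta + eta\<^sup>2 / 2)))"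
    by (simp add: exp_of_nat_mult[symmetric] algebra_simps)
  also have "\<dots> \<le> exp (- 3)"
    using j by simp
  also have "\<dots> \<le> 1/19"
    using exp_3_ge_19 by (simp add: exp_minus divide_simps)
  finally show ?thesis .
qed

lemma gd_drift_bounds:
  fixes A c eta :: real and j :: nat
  defines "q \<equiv> 1 - eta - eta * c"
  assumes A: "A \<le> 1" and c: "0 \<le> c" "c \<le> A / 40"
    and eta: "0 < eta" "eta \<le> 1/2" and j: "3 / eta - 1 \<le> real j"
  shows "0 \<le> q" "0.9 * A \<le> eta * (A - c) * (\<Sum>i<j. q ^ i)" "(\<Sum>i<j. (q\<^sup>2) ^ i) \<le> 1 / eta"
proof -
  have one_minus_q: "1 - q = eta * (1 + c)"
    by (simp add: q_def algebra_simps)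
  have "eta * c \<le> 1/2 * 1"
    using A c eta by (intro mult_mono) auto
  then show q0: "0 \<le> q"
    using eta by (simp add: q_def)
  have "0 \<le> eta * c"
    using c eta by simp
  then have q1: "q < 1" "q \<le> 1 - eta"
    using eta by (simp_all add: q_def)
  have "q ^ j \<le> (1 - eta) ^ j"
    using q0 q1 by (intro power_mono)
  also have "\<dots> \<le> 1/19"
    using one_minus_power_le[OF eta j] .
  finally have qj: "q ^ j \<le> 1/19" .
  have "0.9 * A * (1 + c) \<le> (A - c) * (18/19)"
  proof -
    have "0.9 * A * (1 + c) = 0.9 * A + 0.9 * (A * c)"
      by (simp add: algebra_simps)
    moreover have "(A - c) * (18/19) = 18/19 * A - 18/19 * c"
      by (simp add: left_diff_distrib mult.commute)
    ultimately show ?thesis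
      using A c mult_left_le_one_le[of c A] by linarith
  qed
  also have "\<dots> \<le> (A - c) * (1 - q ^ j)"
    using c qj by (intro mult_left_mono) auto
  also have "\<dots> = eta * (A - c) * (\<Sum>i<j. q ^ i) * (1 + c)"
    using q1 eta c by (simp add: sum_gp_strict one_minus_q)
  finally show "0.9 * A \<le> eta * (A - c) * (\<Sum>i<j. q ^ i)"
    by (rule mult_right_le_imp_le) (use c in simp)
  have "(\<Sum>i<j. (q\<^sup>2) ^ i) \<le> (\<Sum>i<j. q ^ i)"
    using q0 q1 by (intro sum_mono) (simp add: power_mult[symmetric] power_decreasing)
  also have "\<dots> \<le> 1 / (1 - q)"
    using q0 q1 by (simp add: sum_gp_strict divide_right_mono)
  also have "\<dots> \<le> 1 / eta"
    using one_minus_q eta c by (simp add: frac_le mult_le_cancel_left1)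
  finally show "(\<Sum>i<j. (q\<^sup>2) ^ i) \<le> 1 / eta" .
qed

lemma (in prob_space) prob_norm_less_le_Chernoff:
  fixes X :: "'a \<Rightarrow> 'b::real_normed_vector"
  assumes X: "X \<in> borel_measurable M" and V: "V > 0" and a: "a > 0"
    and laplace: "\<And>lam. 0 \<le> lam \<Longrightarrow>
      (\<integral>\<^sup>+ w. ennreal (exp (- lam * norm (X w))) \<partial>M) \<le> ennreal (exp (- lam * B + lam\<^sup>2 * V))"
  shows "prob {w \<in> space M. norm (X w) < B - a} \<le> exp (- a\<^sup>2 / (4 * V))"
proof -
  define lam where "lam = a / (2 * V)"
  have lam: "lam > 0" using V a by (simp add: lam_def)
  have "emeasure M {w \<in> space M. norm (X w) < B - a} \<le> emeasure M {w \<in> space M. norm (X w) \<le> B - a}"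
    using X by (intro emeasure_mono) auto
  also have "\<dots> \<le> ennreal (exp (lam * (B - a))) *
      (\<integral>\<^sup>+ w. ennreal (exp (- lam * norm (X w))) * indicator (space M) w \<partial>M)"
    using X by (intro Chernoff_ineq_nn_integral_le lam) auto
  also have "(\<integral>\<^sup>+ w. ennreal (exp (- lam * norm (X w))) * indicator (space M) w \<partial>M)
      = (\<integral>\<^sup>+ w. ennreal (exp (- lam * norm (X w))) \<partial>M)"
    by (intro nn_integral_cong) simp
  also have "ennreal (exp (lam * (B - a))) * \<dots> \<le> ennreal (exp (lam * (B - a))) * ennreal (exp (- lam * B + lam\<^sup>2 * V))"
    using lam by (intro mult_left_mono laplace) auto
  also have "\<dots> = ennreal (exp (lam * (B - a) + (- lam * B + lam\<^sup>2 * V)))"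
    by (simp add: ennreal_mult[symmetric] exp_add)
  also have "lam * (B - a) + (- lam * B + lam\<^sup>2 * V) = - a\<^sup>2 / (4 * V)"
    using V by (simp add: lam_def field_simps power2_eq_square)
  finally show ?thesis
    by (simp add: emeasure_eq_measure)
qed

lemma (in prob_space) gd_iterate_laplace_le:
  fixes z :: "nat \<Rightarrow> 'a \<Rightarrow> 'b::euclidean_space" and F :: "'b \<Rightarrow> 'b"
    and d :: nat and eta c sigma lam :: real
  assumes e: "e \<in> Basis" and eta: "0 < eta" "eta \<le> 1/2" and sigma: "sigma > 0"
    and c: "0 \<le> c" "c \<le> cos ((gfun ^^ d) pi) / 40"
    and F: "F \<in> borel_measurable borel"
    and F_close: "\<And>y v. (Lfun d e has_derivative (\<lambda>h. v \<bullet> h)) (at y) \<Longrightarrow>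
                   norm (F y - v) \<le> c * (norm y + 1)"
    and z_indep: "indep_vars (\<lambda>_. borel) z {1..}"
    and z_gauss: "\<And>k. k \<ge> 1 \<Longrightarrow> distributed M lborel (z k) (\<lambda>v. ennreal (gauss_dens sigma v))"
    and j: "3 / eta - 1 \<le> real j" and lam: "0 \<le> lam"
  shows "(\<integral>\<^sup>+ w. ennreal (exp (- lam * norm (gd_iterate eta F x0 (Suc j) (\<lambda>i. z i w)))) \<partial>M)
    \<le> ennreal (exp (- lam * (0.9 * cos ((gfun ^^ d) pi)) + lam\<^sup>2 * (sigma\<^sup>2 / (2 * eta))))"
proof -
  define A where "A = cos ((gfun ^^ d) pi)"
  define q where "q = 1 - eta - eta * c"
  have drift: "0 \<le> q" "0.9 * A \<le> eta * (A - c) * (\<Sum>i<j. q ^ i)" "(\<Sum>i<j. (q\<^sup>2) ^ i) \<le> 1 / eta"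
    using gd_drift_bounds[OF _ c[folded A_def] eta j] by (simp_all add: A_def q_def)
  have "lam * (0.9 * A) \<le> lam * (eta * (A - c) * (\<Sum>i<j. q ^ i))"
    using drift(2) lam by (rule mult_left_mono)
  moreover have "lam\<^sup>2 * (sigma\<^sup>2 / 2) * (\<Sum>i<j. (q\<^sup>2) ^ i) \<le> lam\<^sup>2 * (sigma\<^sup>2 / 2) * (1 / eta)"
    using drift(3) by (intro mult_left_mono) auto
  ultimately have "- lam * (eta * (A - c)) * (\<Sum>i<j. q ^ i) + lam\<^sup>2 * (sigma\<^sup>2 / 2) * (\<Sum>i<j. (q\<^sup>2) ^ i)
      \<le> - lam * (0.9 * A) + lam\<^sup>2 * (sigma\<^sup>2 / (2 * eta))"
    by (simp add: mult.assoc)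
  then have "ennreal (exp (- lam * (eta * (A - c)) * (\<Sum>i<j. q ^ i) + lam\<^sup>2 * (sigma\<^sup>2 / 2) * (\<Sum>i<j. (q\<^sup>2) ^ i)))
      \<le> ennreal (exp (- lam * (0.9 * A) + lam\<^sup>2 * (sigma\<^sup>2 / (2 * eta))))"
    by (intro ennreal_leI) simp
  with gd_iterate_laplace_le_geometric[OF e eta(1) c(1) drift(1)[unfolded q_def] sigma F F_close
      z_indep z_gauss lam]
  show ?thesis
    unfolding A_def q_def by (rule order_trans)
qed

theorem mainTheorem8:
  fixes d :: nat and eta sigma c :: real and e x0 :: "'a::euclidean_space"
    and F :: "'a \<Rightarrow> 'a" and M :: "'w measure"
    and z :: "nat \<Rightarrow> 'w \<Rightarrow> 'a" and x :: "nat \<Rightarrow> 'w \<Rightarrow> 'a"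
  assumes d: "d \<ge> 1"
    and e: "e \<in> Basis"
    and eta: "0 < eta" "eta \<le> 1/2"
    and sigma: "sigma > 0"
    and c: "0 \<le> c" "c \<le> cos ((gfun ^^ d) pi) / 40"
    and Fmeas: "F \<in> borel_measurable borel"
    and Fclose: "\<And>y v. (Lfun d e has_derivative (\<lambda>h. v \<bullet> h)) (at y) \<Longrightarrow>
                   norm (F y - v) \<le> c * (norm y + 1)"
    and x0: "x0 \<noteq> 0"
    and P: "prob_space M"
    and zind: "prob_space.indep_vars M (\<lambda>_. borel) z {1..}"
    and zdist: "\<And>k. k \<ge> 1 \<Longrightarrow> distributed M lborel (z k) (\<lambda>v. ennreal (gauss_dens sigma v))"
    and xinit: "\<And>w. x 0 w = x0"
    and xstep: "\<And>t w. x (Suc t) w = x t w - eta *\<^sub>R F (x t w) + z (Suc t) w"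
  shows "\<forall>t::nat. \<forall>a::real. real t \<ge> 3 / eta \<longrightarrow> a > 0 \<longrightarrow>
           prob_space.prob M {w \<in> space M. norm (x t w) < 0.9 * cos ((gfun ^^ d) pi) - a}
             \<le> exp (- (2 * eta / sigma\<^sup>2) * a\<^sup>2 / 4)"
proof (intro allI impI)
  interpret prob_space M by (rule P)
  fix t :: nat and a :: real
  assume t: "3 / eta \<le> real t" and a: "0 < a"
  obtain j where j: "t = Suc j" "3 / eta - 1 \<le> real j"
    using t eta by (cases t) (auto simp: field_simps)
  have x_eq: "x k = (\<lambda>w. gd_iterate eta F x0 k (\<lambda>i. z i w))" for k
    by (induction k) (simp_all add: fun_eq_iff xinit xstep)
  have "x t \<in> borel_measurable M"
    using indep_var_rv1[OF indep_var_gd_iterate_noise[OF zind Fmeas]] by (simp add: x_eq)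
  moreover have "(\<integral>\<^sup>+ w. ennreal (exp (- lam * norm (x t w))) \<partial>M)
      \<le> ennreal (exp (- lam * (0.9 * cos ((gfun ^^ d) pi)) + lam\<^sup>2 * (sigma\<^sup>2 / (2 * eta))))"
    if "0 \<le> lam" for lam
    using gd_iterate_laplace_le[OF e eta sigma c Fmeas Fclose zind zdist j(2) that]
    unfolding x_eq j(1) .
  ultimately have "prob {w \<in> space M. norm (x t w) < 0.9 * cos ((gfun ^^ d) pi) - a}
      \<le> exp (- a\<^sup>2 / (4 * (sigma\<^sup>2 / (2 * eta))))"
    using sigma eta a by (intro prob_norm_less_le_Chernoff) auto
  moreover have "- a\<^sup>2 / (4 * (sigma\<^sup>2 / (2 * eta))) = - (2 * eta / sigma\<^sup>2) * a\<^sup>2 / 4"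
    by (simp add: field_simps)
  ultimately show "prob {w \<in> space M. norm (x t w) < 0.9 * cos ((gfun ^^ d) pi) - a}
      \<le> exp (- (2 * eta / sigma\<^sup>2) * a\<^sup>2 / 4)"
    by argo
qed

end
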